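(* Let $r_1,r_2,\mu,a_{12},a_{13},a_{21},a_{31},d$ be positive with $r_1>a_{12}$ and $a_{31}>\mu$, let $c>c_*:=2\sqrt{d(a_{31}-\mu)}$ and $\rho=c^2/d$. Consider the system in $\mathbb{R}^4$ \[ \dot X_1=X_1\big(r_1(1-X_1)-a_{12}X_2-a_{13}Y\big),\quad \dot X_2=X_2\big(r_2(1-X_2)+a_{21}X_1\big),\quad \dot Y=\rho(Y-Z),\quad \dot Z=Y(-\mu+a_{31}X_1), \] with flow $\Phi_t$. Let \[ \sigma_1=\frac{\rho+\sqrt{\rho^2-4\rho(a_{31}-\mu)}}{2\rho},\qquad \sigma_2=\frac{\rho+\sqrt{\rho^2+4\rho\mu}}{2\rho}, \] \[ \Sigma=\Big\{(X_1,X_2,Y,Z):0\le X_1\le1,\ 0\le X_2\le 1+\tfrac{a_{21}}{r_2},\ Y\ge0,\ \sigma_1Y\le Z\le\sigma_2Y\Big\}, \] and let $Q_1,\dots,Q_5\subset\partial\Sigma$ be $Q_1=\Sigma\cap\{X_1=0\}$, $Q_2=\Sigma\cap\{X_1=1\}$, $Q_3=\Sigma\cap\{X_2=0\}$, $Q_4=\Sigma\cap\{X_2=1+a_{21}/r_2\}$, $Q_5=\{0<X_1<1,\ 0<X_2<1+a_{21}/r_2,\ Y=Z=0\}$. Then for any $p$ in the interior of $\Sigma$, the trajectory $\Phi_t(p)$ cannot leave $\Sigma$ through a point of $Q_1\cup Q_2\cup Q_3\cup Q_4\cup Q_5$ at any positive time.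
   Context: This system arises from traveling wave profiles $(U,V,W)(x+ct)$ of the reaction-diffusion system $u_t=r_1u(1-u)-a_{12}uv-a_{13}uw$, $v_t=r_2v(1-v)+a_{21}uv$, $w_t=d w_{xx}-\mu w+a_{31}uw$ via $X_1(t)=U(ct)$, $X_2(t)=V(ct)$, $Y(t)=W(ct)$, $Z(t)=W(ct)-\frac{d}{c}W'(ct)$. For $c>c_*$ one has $0<\sigma_1<1<\sigma_2$. *)

theory Defs
  imports "HOL-Analysis.Analysis"
begin

type_synonym state = "real \<times> real \<times> real \<times> real"

definition rho :: "real \<Rightarrow> real \<Rightarrow> real" where
  "rho c d = c\<^sup>2 / d"

definition sigma1 :: "real \<Rightarrow> real \<Rightarrow> real \<Rightarrow> real" where
  "sigma1 \<rho> a31 \<mu> = (\<rho> + sqrt (\<rho>\<^sup>2 - 4 * \<rho> * (a31 - \<mu>))) / (2 * \<rho>)"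

definition sigma2 :: "real \<Rightarrow> real \<Rightarrow> real" where
  "sigma2 \<rho> \<mu> = (\<rho> + sqrt (\<rho>\<^sup>2 + 4 * \<rho> * \<mu>)) / (2 * \<rho>)"

definition vf :: "real \<Rightarrow> real \<Rightarrow> real \<Rightarrow> real \<Rightarrow> real \<Rightarrow> real \<Rightarrow> real \<Rightarrow> real \<Rightarrow> state \<Rightarrow> state" where
  "vf r1 r2 \<mu> a12 a13 a21 a31 \<rho> = (\<lambda>(x1, x2, y, z).
     (x1 * (r1 * (1 - x1) - a12 * x2 - a13 * y),
      x2 * (r2 * (1 - x2) + a21 * x1),
      \<rho> * (y - z),
      y * (- \<mu> + a31 * x1)))"

definition SigmaSet :: "real \<Rightarrow> real \<Rightarrow> real \<Rightarrow> real \<Rightarrow> state set" where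
  "SigmaSet r2 a21 s1 s2 = {(x1, x2, y, z). 0 \<le> x1 \<and> x1 \<le> 1 \<and> 0 \<le> x2 \<and> x2 \<le> 1 + a21 / r2
      \<and> y \<ge> 0 \<and> s1 * y \<le> z \<and> z \<le> s2 * y}"

definition Qset :: "real \<Rightarrow> real \<Rightarrow> real \<Rightarrow> real \<Rightarrow> state set" where
  "Qset r2 a21 s1 s2 =
     (SigmaSet r2 a21 s1 s2 \<inter> {(x1, x2, y, z). x1 = 0})
   \<union> (SigmaSet r2 a21 s1 s2 \<inter> {(x1, x2, y, z). x1 = 1})
   \<union> (SigmaSet r2 a21 s1 s2 \<inter> {(x1, x2, y, z). x2 = 0})
   \<union> (SigmaSet r2 a21 s1 s2 \<inter> {(x1, x2, y, z). x2 = 1 + a21 / r2})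
   \<union> {(x1, x2, y, z). 0 < x1 \<and> x1 < 1 \<and> 0 < x2 \<and> x2 < 1 + a21 / r2 \<and> y = 0 \<and> z = 0}"

end

theory Submission
  imports Defs
begin

text \<open>On \<open>[0, T]\<close> the trajectory lies in \<open>\<Sigma>\<close> and is bounded, so each of \<open>X\<^sub>1, X\<^sub>2, Y\<close>
  satisfies a linear differential inequality \<open>u' \<ge> -K u\<close>; hence \<open>u e\<^sup>K\<^sup>t\<close> is nondecreasing
  and \<open>u\<close> stays positive, which rules out \<open>Q\<^sub>1\<close>, \<open>Q\<^sub>3\<close> and \<open>Q\<^sub>5\<close>. Once \<open>X\<^sub>2, Y > 0\<close>, the vector
  field points strictly into \<open>\<Sigma>\<close> on the face \<open>X\<^sub>1 = 1\<close>, and once also \<open>X\<^sub>1 < 1\<close>, on the face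
  \<open>X\<^sub>2 = 1 + a\<^sub>2\<^sub>1/r\<^sub>2\<close>; so \<open>Q\<^sub>2\<close> and \<open>Q\<^sub>4\<close> cannot be reached from inside \<open>\<Sigma>\<close> either.\<close>

lemma deriv_ge_neg_linear_imp_pos:
  fixes f f' :: "real \<Rightarrow> real"
  assumes "a \<le> b"
    and deriv: "\<And>t. t \<in> {a..b} \<Longrightarrow> (f has_real_derivative f' t) (at t)"
    and lower: "\<And>t. t \<in> {a..b} \<Longrightarrow> - K * f t \<le> f' t"
    and "0 < f a"
  shows "0 < f b"
proof -
  define h where "h t = f t * exp (K * (t - a))" for t
  have "h a \<le> h b"
  proof (rule DERIV_nonneg_imp_nondecreasing[OF \<open>a \<le> b\<close>])
    fix t assume "a \<le> t" "t \<le> b"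
    then have t: "t \<in> {a..b}" by simp
    have "(h has_real_derivative exp (K * (t - a)) * (f' t + K * f t)) (at t)"
      unfolding h_def by (rule derivative_eq_intros deriv[OF t] refl)+ (simp add: algebra_simps)
    moreover have "0 \<le> exp (K * (t - a)) * (f' t + K * f t)"
      using lower[OF t] by simp
    ultimately show "\<exists>y. (h has_real_derivative y) (at t) \<and> 0 \<le> y" by blast
  qed
  then have "0 < f b * exp (K * (b - a))"
    using \<open>0 < f a\<close> by (simp add: h_def)
  then show ?thesis
    by (simp add: zero_less_mult_iff)
qed

lemma deriv_neg_obtains_greater_left:
  fixes f :: "real \<Rightarrow> real"
  assumes "(f has_real_derivative D) (at b)" "D < 0" "a < b"
  obtains t where "t \<in> {a..<b}" "f b < f t"
proof -
  obtain d where "d > 0" and dec: "\<And>h. 0 < h \<Longrightarrow> h < d \<Longrightarrow> f b < f (b - h)"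
    using DERIV_neg_dec_left[OF assms(1,2)] by blast
  define h where "h = min (d / 2) (b - a)"
  have "0 < h" "h < d" "b - h \<in> {a..<b}"
    using \<open>d > 0\<close> \<open>a < b\<close> by (auto simp: h_def)
  then show thesis
    using dec that by blast
qed

lemma interior_subset_halfspace_ge_imp_gt:
  fixes p :: "'a::euclidean_space"
  assumes "p \<in> interior S" "S \<subseteq> {q. b \<le> u \<bullet> q}" "u \<noteq> 0"
  shows "b < u \<bullet> p"
  using interior_mono[OF assms(2)] assms(1,3) by auto

lemma interior_SigmaSet_pos:
  assumes "(x1, x2, y, z) \<in> interior (SigmaSet r2 a21 s1 s2)"
  shows "0 < x1" "0 < x2" "0 < y"
proof -
  have "SigmaSet r2 a21 s1 s2 \<subseteq> {q. 0 \<le> (1, 0, 0, 0) \<bullet> q}"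
    "SigmaSet r2 a21 s1 s2 \<subseteq> {q. 0 \<le> (0, 1, 0, 0) \<bullet> q}"
    "SigmaSet r2 a21 s1 s2 \<subseteq> {q. 0 \<le> (0, 0, 1, 0) \<bullet> q}"
    by (auto simp: SigmaSet_def)
  from this[THEN interior_subset_halfspace_ge_imp_gt[OF assms]] show "0 < x1" "0 < x2" "0 < y"
    by (simp_all add: zero_prod_def)
qed

lemmas has_vector_derivative_fst = bounded_linear.has_vector_derivative[OF bounded_linear_fst]
lemmas has_vector_derivative_snd = bounded_linear.has_vector_derivative[OF bounded_linear_snd]

context
  fixes r1 r2 \<mu> a12 a13 a21 a31 \<rho> s1 s2 T :: real
    and x1 x2 y z :: "real \<Rightarrow> real"
  assumes ode: "\<And>t. t \<in> {0..T} \<Longrightarrow> ((\<lambda>t. (x1 t, x2 t, y t, z t)) has_vector_derivative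
      vf r1 r2 \<mu> a12 a13 a21 a31 \<rho> (x1 t, x2 t, y t, z t)) (at t)"
    and in_Sigma: "\<And>t. t \<in> {0..T} \<Longrightarrow> (x1 t, x2 t, y t, z t) \<in> SigmaSet r2 a21 s1 s2"
begin

lemma Sigma_solution_derivs:
  assumes "t \<in> {0..T}"
  shows "(x1 has_real_derivative x1 t * (r1 * (1 - x1 t) - a12 * x2 t - a13 * y t)) (at t)"
    and "(x2 has_real_derivative x2 t * (r2 * (1 - x2 t) + a21 * x1 t)) (at t)"
    and "(y has_real_derivative \<rho> * (y t - z t)) (at t)"
proof -
  note d = ode[OF assms, unfolded vf_def, simplified]
  show "(x1 has_real_derivative x1 t * (r1 * (1 - x1 t) - a12 * x2 t - a13 * y t)) (at t)"
    using has_vector_derivative_fst[OF d]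
    by (simp add: has_real_derivative_iff_has_vector_derivative)
  show "(x2 has_real_derivative x2 t * (r2 * (1 - x2 t) + a21 * x1 t)) (at t)"
    using has_vector_derivative_fst[OF has_vector_derivative_snd[OF d]]
    by (simp add: has_real_derivative_iff_has_vector_derivative)
  show "(y has_real_derivative \<rho> * (y t - z t)) (at t)"
    using has_vector_derivative_fst[OF has_vector_derivative_snd[OF has_vector_derivative_snd[OF d]]]
    by (simp add: has_real_derivative_iff_has_vector_derivative)
qed

lemma Sigma_solution_y_bounded:
  obtains B where "\<And>t. t \<in> {0..T} \<Longrightarrow> y t \<le> B"
proof -
  have "continuous_on {0..T} y"
    using DERIV_isCont[OF Sigma_solution_derivs(3)] by (intro continuous_at_imp_continuous_on) blast
  then have "bounded (y ` {0..T})"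
    by (intro compact_imp_bounded compact_continuous_image compact_Icc)
  then obtain B where "\<forall>t\<in>{0..T}. \<bar>y t\<bar> \<le> B"
    by (auto simp: bounded_iff)
  then show thesis
    using that abs_le_D1 by blast
qed

lemma Sigma_solution_x1_pos:
  assumes "r1 \<ge> 0" "a12 \<ge> 0" "a13 \<ge> 0" "0 \<le> T" "0 < x1 0"
  shows "0 < x1 T"
proof -
  obtain B where B: "\<And>t. t \<in> {0..T} \<Longrightarrow> y t \<le> B"
    using Sigma_solution_y_bounded by blast
  define K where "K = a12 * (1 + a21 / r2) + a13 * B"
  show ?thesis
  proof (rule deriv_ge_neg_linear_imp_pos[where K = K, OF \<open>0 \<le> T\<close> Sigma_solution_derivs(1) _ \<open>0 < x1 0\<close>])
    fix t assume t: "t \<in> {0..T}"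
    then have "0 \<le> x1 t" "x1 t \<le> 1" "x2 t \<le> 1 + a21 / r2"
      using in_Sigma[OF t] by (auto simp: SigmaSet_def)
    then have "0 \<le> r1 * (1 - x1 t)" "a12 * x2 t \<le> a12 * (1 + a21 / r2)" "a13 * y t \<le> a13 * B"
      using assms B[OF t] by (simp_all add: mult_left_mono)
    then have "0 \<le> x1 t * (r1 * (1 - x1 t) - a12 * x2 t - a13 * y t + K)"
      using \<open>0 \<le> x1 t\<close> unfolding K_def by (intro mult_nonneg_nonneg) auto
    then show "- K * x1 t \<le> x1 t * (r1 * (1 - x1 t) - a12 * x2 t - a13 * y t)"
      by (simp add: algebra_simps)
  qed
qed

lemma Sigma_solution_x2_pos:
  assumes "r2 > 0" "a21 \<ge> 0" "0 \<le> T" "0 < x2 0"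
  shows "0 < x2 T"
proof (rule deriv_ge_neg_linear_imp_pos[where K = a21, OF \<open>0 \<le> T\<close> Sigma_solution_derivs(2) _ \<open>0 < x2 0\<close>])
  fix t assume t: "t \<in> {0..T}"
  then have "0 \<le> x1 t" "0 \<le> x2 t" "x2 t \<le> 1 + a21 / r2"
    using in_Sigma[OF t] by (auto simp: SigmaSet_def)
  then have "r2 * x2 t \<le> r2 + a21"
    using \<open>r2 > 0\<close> by (simp add: field_simps)
  moreover have "0 \<le> a21 * x1 t"
    using \<open>0 \<le> x1 t\<close> \<open>a21 \<ge> 0\<close> by simp
  ultimately have "0 \<le> x2 t * (r2 * (1 - x2 t) + a21 * x1 t + a21)"
    using \<open>0 \<le> x2 t\<close> by (intro mult_nonneg_nonneg) (auto simp: algebra_simps)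
  then show "- a21 * x2 t \<le> x2 t * (r2 * (1 - x2 t) + a21 * x1 t)"
    by (simp add: algebra_simps)
qed

lemma Sigma_solution_y_pos:
  assumes "\<rho> \<ge> 0" "0 \<le> T" "0 < y 0"
  shows "0 < y T"
proof (rule deriv_ge_neg_linear_imp_pos[where K = "\<rho> * s2", OF \<open>0 \<le> T\<close> Sigma_solution_derivs(3) _ \<open>0 < y 0\<close>])
  fix t assume t: "t \<in> {0..T}"
  then have "0 \<le> y t" "z t \<le> s2 * y t"
    using in_Sigma[OF t] by (auto simp: SigmaSet_def)
  then have "0 \<le> \<rho> * y t" "\<rho> * z t \<le> \<rho> * (s2 * y t)"
    using \<open>\<rho> \<ge> 0\<close> by (simp_all add: mult_left_mono)
  then show "- (\<rho> * s2) * y t \<le> \<rho> * (y t - z t)"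
    by (simp add: algebra_simps)
qed

lemma Sigma_solution_x1_ne_1:
  assumes "0 < T" "a12 > 0" "a13 \<ge> 0" "0 < x2 T"
  shows "x1 T \<noteq> 1"
proof
  assume "x1 T = 1"
  have T: "T \<in> {0..T}"
    using \<open>0 < T\<close> by simp
  have "0 \<le> y T"
    using in_Sigma[OF T] by (simp add: SigmaSet_def)
  then have "0 < a12 * x2 T" "0 \<le> a13 * y T"
    using assms(2-4) by simp_all
  then have "x1 T * (r1 * (1 - x1 T) - a12 * x2 T - a13 * y T) < 0"
    using \<open>x1 T = 1\<close> by simp
  then obtain t where "t \<in> {0..<T}" "x1 T < x1 t"
    using deriv_neg_obtains_greater_left[OF Sigma_solution_derivs(1)[OF T] _ \<open>0 < T\<close>] by blast
  then show False
    using in_Sigma[of t] \<open>x1 T = 1\<close> by (auto simp: SigmaSet_def)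
qed

lemma Sigma_solution_x2_ne_bound:
  assumes "0 < T" "r2 > 0" "a21 > 0" "x1 T < 1" "0 < x2 T"
  shows "x2 T \<noteq> 1 + a21 / r2"
proof
  assume top: "x2 T = 1 + a21 / r2"
  have T: "T \<in> {0..T}"
    using \<open>0 < T\<close> by simp
  have "r2 * (1 - x2 T) + a21 * x1 T = a21 * (x1 T - 1)"
    using top \<open>r2 > 0\<close> by (simp add: field_simps)
  also have "\<dots> < 0"
    using assms(3,4) by (simp add: mult_pos_neg)
  finally have "x2 T * (r2 * (1 - x2 T) + a21 * x1 T) < 0"
    using \<open>0 < x2 T\<close> by (simp add: mult_pos_neg)
  then obtain t where "t \<in> {0..<T}" "x2 T < x2 t"
    using deriv_neg_obtains_greater_left[OF Sigma_solution_derivs(2)[OF T] _ \<open>0 < T\<close>] by blast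
  then show False
    using in_Sigma[of t] top by (auto simp: SigmaSet_def)
qed

lemma Sigma_solution_not_in_Qset:
  assumes "r1 \<ge> 0" "r2 > 0" "a12 > 0" "a13 \<ge> 0" "a21 > 0" "\<rho> \<ge> 0" "0 < T"
    and "(x1 0, x2 0, y 0, z 0) \<in> interior (SigmaSet r2 a21 s1 s2)"
  shows "(x1 T, x2 T, y T, z T) \<notin> Qset r2 a21 s1 s2"
proof -
  note start = interior_SigmaSet_pos[OF assms(8)]
  have pos: "0 < x1 T" "0 < x2 T" "0 < y T"
    using Sigma_solution_x1_pos Sigma_solution_x2_pos Sigma_solution_y_pos assms start by simp_all
  have "x1 T \<noteq> 1"
    using Sigma_solution_x1_ne_1 assms pos by simp
  moreover have "x1 T \<le> 1"
    using in_Sigma[of T] \<open>0 < T\<close> by (simp add: SigmaSet_def)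
  ultimately have "x2 T \<noteq> 1 + a21 / r2"
    using Sigma_solution_x2_ne_bound assms pos by simp
  with pos \<open>x1 T \<noteq> 1\<close> show ?thesis
    by (auto simp: Qset_def)
qed

end

theorem lemma4:
  fixes r1 r2 \<mu> a12 a13 a21 a31 d c :: real
    and x :: "real \<Rightarrow> state" and J :: "real set"
  assumes "r1 > 0" "r2 > 0" "\<mu> > 0" "a12 > 0" "a13 > 0" "a21 > 0" "a31 > 0" "d > 0"
    and "r1 > a12" "a31 > \<mu>"
    and "c > 2 * sqrt (d * (a31 - \<mu>))"
    and "open J" "is_interval J" "0 \<in> J"
    and "\<forall>t\<in>J. (x has_vector_derivative
            vf r1 r2 \<mu> a12 a13 a21 a31 (rho c d) (x t)) (at t)"
    and "x 0 \<in> interior (SigmaSet r2 a21 (sigma1 (rho c d) a31 \<mu>) (sigma2 (rho c d) \<mu>))"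
  shows "\<not> (\<exists>T>0. T \<in> J
            \<and> x ` {0..T} \<subseteq> SigmaSet r2 a21 (sigma1 (rho c d) a31 \<mu>) (sigma2 (rho c d) \<mu>)
            \<and> x T \<in> Qset r2 a21 (sigma1 (rho c d) a31 \<mu>) (sigma2 (rho c d) \<mu>)
            \<and> (\<forall>\<epsilon>>0. \<exists>t\<in>J. T < t \<and> t < T + \<epsilon>
                 \<and> x t \<notin> SigmaSet r2 a21 (sigma1 (rho c d) a31 \<mu>) (sigma2 (rho c d) \<mu>)))"
proof
  let ?S = "SigmaSet r2 a21 (sigma1 (rho c d) a31 \<mu>) (sigma2 (rho c d) \<mu>)"
  let ?Q = "Qset r2 a21 (sigma1 (rho c d) a31 \<mu>) (sigma2 (rho c d) \<mu>)"
  assume "\<exists>T>0. T \<in> J \<and> x ` {0..T} \<subseteq> ?S \<and> x T \<in> ?Q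
    \<and> (\<forall>\<epsilon>>0. \<exists>t\<in>J. T < t \<and> t < T + \<epsilon> \<and> x t \<notin> ?S)"
  then obtain T where "0 < T" "T \<in> J" and inside: "x ` {0..T} \<subseteq> ?S" and exit: "x T \<in> ?Q"
    by blast
  have "{0..T} \<subseteq> J"
    using mem_is_interval_1_I[OF \<open>is_interval J\<close> \<open>0 \<in> J\<close> \<open>T \<in> J\<close>] by auto
  have "0 \<le> rho c d"
    using \<open>d > 0\<close> by (simp add: rho_def)
  define x1 x2 y z where "x1 t = fst (x t)" and "x2 t = fst (snd (x t))"
    and "y t = fst (snd (snd (x t)))" and "z t = snd (snd (snd (x t)))" for t
  have x_eq: "x = (\<lambda>t. (x1 t, x2 t, y t, z t))"
    by (simp add: x1_def x2_def y_def z_def)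
  have "(x1 T, x2 T, y T, z T) \<notin> ?Q"
  proof (rule Sigma_solution_not_in_Qset[where ?r1.0 = r1 and \<mu> = \<mu> and ?a12.0 = a12
        and ?a13.0 = a13 and ?a31.0 = a31 and \<rho> = "rho c d" and T = T
        and ?x1.0 = x1 and ?x2.0 = x2 and y = y and z = z])
    show "((\<lambda>t. (x1 t, x2 t, y t, z t)) has_vector_derivative
        vf r1 r2 \<mu> a12 a13 a21 a31 (rho c d) (x1 t, x2 t, y t, z t)) (at t)" if "t \<in> {0..T}" for t
      using assms(15) \<open>{0..T} \<subseteq> J\<close> that unfolding x_eq by blast
    show "(x1 t, x2 t, y t, z t) \<in> ?S" if "t \<in> {0..T}" for t
      using inside that unfolding x_eq by blast
    show "(x1 0, x2 0, y 0, z 0) \<in> interior ?S"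
      using assms(16) unfolding x_eq .
  qed (use assms(1,2,4,5,6) \<open>0 < T\<close> \<open>0 \<le> rho c d\<close> in simp_all)
  with exit show False
    by (simp add: x_eq)
qed

end
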